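(* Let $N \geq 1$ and let $\mu$ be the uniform probability measure on the discrete torus $\mathbb{Z}/(N\mathbb{Z})$. For every probability measure $\nu$ on $\mathbb{Z}/(N\mathbb{Z})$, $$H(\nu|\mu) \leq \sqrt{2}\, W_c(\nu,\mu)\sqrt{I(\nu|\mu)}.$$
   Context: The relative entropy is $H(\nu|\mu) = \sum_{x\in\mathbb{Z}/(N\mathbb{Z})}\nu(x)(\log\nu(x)+\log N)$ (with $0\log 0=0$). The Fisher information is $$I(\nu|\mu) = \sum_{x\in\mathbb{Z}/(N\mathbb{Z})}\big(\log\nu(x+1)-\log\nu(x)\big)\big(\nu(x+1)-\nu(x)\big),$$ (taking the value $+\infty$ if some term is infinite). The transport cost $W_c$ is defined by $$W_c(\nu,\mu)^2 = \inf_{X\sim\nu,\,Y\sim\mu}\mathbb{E}\big[d(X,Y)+d(X,Y)^2\big],$$ with $W_c \geq 0$, where the infimum is over all couplings of $X\sim\nu$ and $Y\sim\mu$, and $d$ is the graph distance on the cycle $\mathbb{Z}/(N\mathbb{Z})$. *)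

theory Defs
  imports "HOL-Analysis.Analysis"
begin

text \<open>The discrete torus Z/NZ is represented by the points 0..N-1 (type nat);
  a probability measure nu on it is a function nat => real, nonnegative on
  {0..<N} with total mass 1 (values outside {0..<N} are irrelevant).\<close>

definition torus_dist :: "nat \<Rightarrow> nat \<Rightarrow> nat \<Rightarrow> nat" where
  "torus_dist N x y = (let k = (x + N - y) mod N in min k (N - k))"

definition is_prob :: "nat \<Rightarrow> (nat \<Rightarrow> real) \<Rightarrow> bool" where
  "is_prob N \<nu> \<longleftrightarrow> (\<forall>x<N. 0 \<le> \<nu> x) \<and> (\<Sum>x<N. \<nu> x) = 1"

text \<open>Relative entropy with respect to the uniform measure (0 log 0 = 0).\<close>
definition rel_entropy :: "nat \<Rightarrow> (nat \<Rightarrow> real) \<Rightarrow> real" where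
  "rel_entropy N \<nu> = (\<Sum>x<N. if \<nu> x = 0 then 0 else \<nu> x * (ln (\<nu> x) + ln (real N)))"

text \<open>Fisher information, with value +infinity if some term is infinite, i.e. if
  exactly one of nu(x), nu(x+1) vanishes. Terms with both values zero are 0.\<close>
definition fisher_info :: "nat \<Rightarrow> (nat \<Rightarrow> real) \<Rightarrow> ereal" where
  "fisher_info N \<nu> =
     (if \<exists>x<N. (\<nu> x = 0) \<noteq> (\<nu> ((x + 1) mod N) = 0) then \<infinity>
      else ereal (\<Sum>x<N. if \<nu> x = 0 then 0 else
              (ln (\<nu> ((x + 1) mod N)) - ln (\<nu> x)) * (\<nu> ((x + 1) mod N) - \<nu> x)))"

definition is_coupling :: "nat \<Rightarrow> (nat \<Rightarrow> real) \<Rightarrow> (nat \<Rightarrow> nat \<Rightarrow> real) \<Rightarrow> bool" where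
  "is_coupling N \<nu> \<pi> \<longleftrightarrow>
     (\<forall>x<N. \<forall>y<N. 0 \<le> \<pi> x y) \<and>
     (\<forall>x<N. (\<Sum>y<N. \<pi> x y) = \<nu> x) \<and>
     (\<forall>y<N. (\<Sum>x<N. \<pi> x y) = 1 / real N)"

definition Wc :: "nat \<Rightarrow> (nat \<Rightarrow> real) \<Rightarrow> real" where
  "Wc N \<nu> = sqrt (Inf {\<Sum>x<N. \<Sum>y<N. \<pi> x y *
        (real (torus_dist N x y) + real (torus_dist N x y) ^ 2) | \<pi>. is_coupling N \<nu> \<pi>})"

end

theory Submission
  imports Defs
begin

(* Let f = N nu be the density of nu with respect to mu, and G = lin_log the primitive of min 1 (1/t)
   vanishing at 0. Since t ln t <= (t - 1) G t, the entropy is at most E[G (f X) - G (f Y)] for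
   every coupling (X, Y) of nu and mu. Walk from Y to X along a shortest path of length d and
   charge its k-th step lambda k, in total lambda (d + d^2) / 2: then
   G (f X) - G (f Y) - lambda (d + d^2) / 2 is at most the sum of the positive parts of the
   charged increments of G o f along the two rays issuing from Y. Averaging over Y uniform,
   every increment D is charged once with each k, and Sum_{k >= 1} (|D| - lambda k)_+ <= D^2 / (2 lambda).
   As (G a - G b)^2 <= (ln a - ln b) (a - b), this gives H <= I / (2 lambda) + lambda E[d + d^2] / 2.
   Optimising over the coupling and over lambda yields H <= W_c sqrt I, which is stronger than
   the claim by the factor sqrt 2. *)

(* The primitive of min 1 (1/t): its derivative squared is at most the derivative of ln,
   which is what lin_log_diff_sq_le expresses in integrated form. *)
definition lin_log :: "real \<Rightarrow> real" where
  "lin_log t = (if t \<le> 1 then t else 1 + ln t)"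

lemma mult_ln_le_lin_log:
  assumes "0 < t"
  shows "t * ln t \<le> (t - 1) * lin_log t"
proof -
  have "ln t \<le> t - 1"
    using assms by (rule ln_le_minus_one)
  then have "t * ln t \<le> t * (t - 1)"
    using assms by (simp add: mult_left_mono)
  with \<open>ln t \<le> t - 1\<close> show ?thesis
    by (simp add: lin_log_def algebra_simps)
qed

lemma lin_log_ge_one: "1 \<le> t \<Longrightarrow> lin_log t = 1 + ln t"
  by (simp add: lin_log_def)

lemma diff_le_ln_diff:
  fixes a b :: real
  assumes "0 < a" "a \<le> b" "b \<le> 1"
  shows "b - a \<le> ln b - ln a"
proof -
  have "1 - a / b \<le> - ln (a / b)"
    using ln_le_minus_one[of "a / b"] assms by simp
  moreover have "(b - a) * b \<le> b - a"
    using assms by (simp add: mult_left_le)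
  then have "b - a \<le> 1 - a / b"
    using assms by (simp add: field_simps)
  ultimately show ?thesis
    using assms by (simp add: ln_div)
qed

lemma ln_diff_le_diff:
  fixes a b :: real
  assumes "1 \<le> a" "a \<le> b"
  shows "ln b - ln a \<le> b - a"
proof -
  have "ln (b / a) \<le> b / a - 1"
    using ln_le_minus_one[of "b / a"] assms by simp
  moreover have "b - a \<le> (b - a) * a"
    using assms by (simp add: mult_le_cancel_left1)
  then have "b / a - 1 \<le> b - a"
    using assms by (simp add: field_simps)
  ultimately show ?thesis
    using assms by (simp add: ln_div)
qed

lemma lin_log_diff_sq_le_ordered:
  assumes "0 < a" "a \<le> b"
  shows "(lin_log b - lin_log a)\<^sup>2 \<le> (ln b - ln a) * (b - a)"
proof -
  consider "b \<le> 1" | "1 \<le> a" | "a < 1" "1 < b"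
    by linarith
  then show ?thesis
  proof cases
    case 1
    then have "(b - a) * (b - a) \<le> (ln b - ln a) * (b - a)"
      using assms diff_le_ln_diff by (intro mult_right_mono) auto
    then show ?thesis
      using 1 assms by (simp add: lin_log_def power2_eq_square)
  next
    case 2
    then have "(ln b - ln a) * (ln b - ln a) \<le> (ln b - ln a) * (b - a)"
      using assms ln_diff_le_diff by (intro mult_left_mono) auto
    then show ?thesis
      using 2 assms by (simp add: lin_log_ge_one power2_eq_square)
  next
    case 3
    have "1 - a \<le> - ln a" and "ln b \<le> b - 1" and "0 < ln b"
      using 3 assms diff_le_ln_diff[of a 1] ln_diff_le_diff[of 1 b] by auto
    then have "((1 - a) + ln b) * ((1 - a) + ln b) \<le> (- ln a + ln b) * ((1 - a) + (b - 1))"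
      using 3 by (intro mult_mono) linarith+
    then show ?thesis
      using 3 by (simp add: lin_log_def power2_eq_square algebra_simps)
  qed
qed

lemma lin_log_diff_sq_le:
  assumes "0 < a" "0 < b"
  shows "(lin_log b - lin_log a)\<^sup>2 \<le> (ln b - ln a) * (b - a)"
proof (cases "a \<le> b")
  case False
  then have "(lin_log a - lin_log b)\<^sup>2 \<le> (ln a - ln b) * (a - b)"
    using assms by (intro lin_log_diff_sq_le_ordered) auto
  then show ?thesis
    by (simp add: power2_commute algebra_simps)
qed (use assms lin_log_diff_sq_le_ordered in auto)

lemma sum_pos_part_le:
  fixes D l :: real
  assumes "0 < l"
  shows "(\<Sum>k<n. max (D - l * (real k + 1)) 0) \<le> D\<^sup>2 / (2 * l)"
proof -
  define g where "g k = (max (D - l * real k) 0)\<^sup>2 / (2 * l)" for k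
  have "max (D - l * (real k + 1)) 0 \<le> g k - g (Suc k)" for k
    using assms by (cases "D - l * (real k + 1) \<ge> 0")
      (auto simp: g_def max_def field_simps power2_eq_square)
  then have "(\<Sum>k<n. max (D - l * (real k + 1)) 0) \<le> (\<Sum>k<n. g k - g (Suc k))"
    by (rule sum_mono)
  also have "\<dots> = g 0 - g n"
    by (rule sum_lessThan_telescope')
  also have "\<dots> \<le> g 0"
    using assms by (simp add: g_def)
  also have "\<dots> \<le> D\<^sup>2 / (2 * l)"
    using assms by (simp add: g_def max_def divide_right_mono)
  finally show ?thesis .
qed

definition periodic_ext :: "nat \<Rightarrow> (nat \<Rightarrow> 'a) \<Rightarrow> int \<Rightarrow> 'a" where
  "periodic_ext N h z = h (nat (z mod int N))"

lemma periodic_ext_of_nat [simp]: "y < N \<Longrightarrow> periodic_ext N h (int y) = h y"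
  by (simp add: periodic_ext_def)

lemma periodic_ext_mod [simp]: "periodic_ext N h (z mod int N) = periodic_ext N h z"
  by (simp add: periodic_ext_def)

lemma periodic_ext_Suc: "y < N \<Longrightarrow> periodic_ext N h (int y + 1) = h ((y + 1) mod N)"
proof -
  have "(int y + 1) mod int N = int ((y + 1) mod N)"
    by (simp add: of_nat_mod add.commute)
  then show ?thesis
    by (simp add: periodic_ext_def)
qed

lemma sum_lessThan_shift_mod:
  fixes H :: "int \<Rightarrow> 'a::comm_monoid_add"
  assumes H: "\<And>z. H (z mod int N) = H z"
  shows "(\<Sum>y<N. H (int y + c)) = (\<Sum>y<N. H (int y))"
proof (rule sum.reindex_bij_witness[where i = "\<lambda>y. nat ((int y - c) mod int N)"
      and j = "\<lambda>y. nat ((int y + c) mod int N)"])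
  fix y assume "y \<in> {..<N}"
  then show "nat ((int (nat ((int y + c) mod int N)) - c) mod int N) = y"
    and "nat ((int (nat ((int y - c) mod int N)) + c) mod int N) = y"
    and "nat ((int y + c) mod int N) \<in> {..<N}"
    and "nat ((int y - c) mod int N) \<in> {..<N}"
    by (simp_all add: mod_diff_left_eq mod_add_left_eq nat_less_iff)
  show "H (int (nat ((int y + c) mod int N))) = H (int y + c)"
    using \<open>y \<in> {..<N}\<close> H by simp
qed

lemma torus_dist_le: "torus_dist N x y \<le> N"
  by (simp add: torus_dist_def Let_def)

lemma torus_dist_cases:
  assumes "x < N" "y < N"
  shows "int x = (int y + int (torus_dist N x y)) mod int N \<or>
         int x = (int y - int (torus_dist N x y)) mod int N"
proof -
  define k where "k = (x + N - y) mod N"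
  have "k < N"
    using assms by (simp add: k_def)
  have "(y + k) mod N = (y + (x + N - y)) mod N"
    by (simp add: k_def mod_add_right_eq)
  also have "\<dots> = x"
    using assms by simp
  finally have x: "int x = (int y + int k) mod int N"
    by (metis of_nat_add of_nat_mod)
  have "(int y - int (N - k)) mod int N = (int y + int k - int N) mod int N"
    using \<open>k < N\<close> by (simp add: of_nat_diff algebra_simps)
  also have "\<dots> = (int y + int k) mod int N"
    by (simp add: minus_mod_self2)
  finally have "int x = (int y - int (N - k)) mod int N"
    using x by simp
  then show ?thesis
    using x by (auto simp: torus_dist_def Let_def k_def[symmetric] min_def)
qed

(* The k-th summand charges the (k + 1)-st step of each ray l (k + 1); along a path of length d
   these charges add up to l (d + d^2) / 2, which is where the cost d + d^2 in Wc comes from. *)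
definition path_excess :: "(int \<Rightarrow> real) \<Rightarrow> nat \<Rightarrow> real \<Rightarrow> int \<Rightarrow> real" where
  "path_excess F n l y =
     (\<Sum>k<n. max (F (y + int k + 1) - F (y + int k) - l * (real k + 1)) 0
           + max (F (y - int k - 1) - F (y - int k) - l * (real k + 1)) 0)"

lemma sum_lessThan_le_sum_add:
  fixes a b :: "nat \<Rightarrow> real"
  assumes "d \<le> n" "\<And>k. 0 \<le> a k" "\<And>k. 0 \<le> b k"
  shows "(\<Sum>k<d. a k) \<le> (\<Sum>k<n. a k + b k)"
proof -
  have "(\<Sum>k<d. a k) \<le> (\<Sum>k<n. a k)"
    using assms by (intro sum_mono2) auto
  also have "\<dots> \<le> (\<Sum>k<n. a k + b k)"
    using assms by (intro sum_mono) auto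
  finally show ?thesis .
qed

lemma shift_diff_le_path_excess:
  fixes F :: "int \<Rightarrow> real"
  assumes "d \<le> n"
  shows "F (y + int d) - F y - l * (real d + (real d)\<^sup>2) / 2 \<le> path_excess F n l y"
    and "F (y - int d) - F y - l * (real d + (real d)\<^sup>2) / 2 \<le> path_excess F n l y"
proof -
  have "F (y + int d) - F y - l * (real d + (real d)\<^sup>2) / 2
      = (\<Sum>k<d. F (y + int k + 1) - F (y + int k) - l * (real k + 1))"
    by (induction d) (simp_all add: algebra_simps power2_eq_square)
  also have "\<dots> \<le> (\<Sum>k<d. max (F (y + int k + 1) - F (y + int k) - l * (real k + 1)) 0)"
    by (intro sum_mono) simp
  also have "\<dots> \<le> path_excess F n l y"
    unfolding path_excess_def using assms by (intro sum_lessThan_le_sum_add) auto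
  finally show "F (y + int d) - F y - l * (real d + (real d)\<^sup>2) / 2 \<le> path_excess F n l y" .
  have "F (y - int d) - F y - l * (real d + (real d)\<^sup>2) / 2
      = (\<Sum>k<d. F (y - int k - 1) - F (y - int k) - l * (real k + 1))"
    by (induction d) (simp_all add: algebra_simps power2_eq_square)
  also have "\<dots> \<le> (\<Sum>k<d. max (F (y - int k - 1) - F (y - int k) - l * (real k + 1)) 0)"
    by (intro sum_mono) simp
  also have "\<dots> \<le> path_excess F n l y"
    unfolding path_excess_def using assms
    by (subst add.commute, intro sum_lessThan_le_sum_add) auto
  finally show "F (y - int d) - F y - l * (real d + (real d)\<^sup>2) / 2 \<le> path_excess F n l y" .
qed

lemma periodic_ext_diff_le_path_excess:
  assumes "x < N" "y < N"
  defines "d \<equiv> real (torus_dist N x y)"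
  shows "h x - h y - l * (d + d\<^sup>2) / 2 \<le> path_excess (periodic_ext N h) N l (int y)"
  using torus_dist_cases[OF assms(1,2)] assms shift_diff_le_path_excess[OF torus_dist_le]
  by (metis periodic_ext_mod periodic_ext_of_nat)

lemma sum_path_excess_le:
  fixes F :: "int \<Rightarrow> real"
  assumes F: "\<And>z. F (z mod int N) = F z" and "0 < l"
  shows "(\<Sum>y<N. path_excess F N l (int y)) \<le> (\<Sum>z<N. (F (int z + 1) - F (int z))\<^sup>2) / (2 * l)"
proof -
  define D where "D z = F (z + 1) - F z" for z
  have D: "D (z mod int N) = D z" for z
    using F[of "z + 1"] F[of "z mod int N + 1"] F[of z] by (simp add: D_def mod_add_left_eq)
  define up where "up k z = max (D z - l * (real k + 1)) 0" for k z
  define down where "down k z = max (- D z - l * (real k + 1)) 0" for k z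
  have up_down: "up k z + down k z = max (\<bar>D z\<bar> - l * (real k + 1)) 0" for k z
  proof -
    have "0 < l * (real k + 1)"
      using \<open>0 < l\<close> by simp
    then show ?thesis
      by (auto simp: up_def down_def max_def abs_if)
  qed
  have up_shift: "(\<Sum>y<N. up k (int y + c)) = (\<Sum>y<N. up k (int y))" for k c
    by (rule sum_lessThan_shift_mod) (simp add: up_def D)
  have down_shift: "(\<Sum>y<N. down k (int y + c)) = (\<Sum>y<N. down k (int y))" for k c
    by (rule sum_lessThan_shift_mod) (simp add: down_def D)
  have "(\<Sum>y<N. path_excess F N l (int y))
      = (\<Sum>k<N. \<Sum>y<N. up k (int y + int k) + down k (int y + (- int k - 1)))"
    unfolding path_excess_def by (subst sum.swap) (simp add: up_def down_def D_def algebra_simps)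
  also have "\<dots> = (\<Sum>k<N. \<Sum>y<N. up k (int y) + down k (int y))"
    by (simp only: sum.distrib up_shift down_shift)
  also have "\<dots> = (\<Sum>y<N. \<Sum>k<N. max (\<bar>D (int y)\<bar> - l * (real k + 1)) 0)"
    by (subst sum.swap) (simp add: up_down)
  also have "\<dots> \<le> (\<Sum>y<N. \<bar>D (int y)\<bar>\<^sup>2 / (2 * l))"
    using \<open>0 < l\<close> by (intro sum_mono sum_pos_part_le)
  also have "\<dots> = (\<Sum>z<N. (F (int z + 1) - F (int z))\<^sup>2) / (2 * l)"
    by (simp add: D_def sum_divide_distrib)
  finally show ?thesis .
qed

definition transport_cost :: "nat \<Rightarrow> (nat \<Rightarrow> nat \<Rightarrow> real) \<Rightarrow> real" where
  "transport_cost N \<pi> =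
     (\<Sum>x<N. \<Sum>y<N. \<pi> x y * (real (torus_dist N x y) + real (torus_dist N x y) ^ 2))"

definition fisher_sum :: "nat \<Rightarrow> (nat \<Rightarrow> real) \<Rightarrow> real" where
  "fisher_sum N \<nu> =
     (\<Sum>x<N. (ln (\<nu> ((x + 1) mod N)) - ln (\<nu> x)) * (\<nu> ((x + 1) mod N) - \<nu> x))"

lemma Wc_eq_transport_cost: "Wc N \<nu> = sqrt (Inf {transport_cost N \<pi> | \<pi>. is_coupling N \<nu> \<pi>})"
  by (simp add: Wc_def transport_cost_def)

lemma transport_cost_nonneg: "is_coupling N \<nu> \<pi> \<Longrightarrow> 0 \<le> transport_cost N \<pi>"
  unfolding transport_cost_def is_coupling_def by (intro sum_nonneg mult_nonneg_nonneg) auto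

lemma is_coupling_product: "is_prob N \<nu> \<Longrightarrow> is_coupling N \<nu> (\<lambda>x y. \<nu> x / real N)"
  by (auto simp: is_coupling_def is_prob_def simp flip: sum_divide_distrib)

lemma is_coupling_sum_fst:
  "is_coupling N \<nu> \<pi> \<Longrightarrow> (\<Sum>x<N. \<Sum>y<N. \<pi> x y * g x) = (\<Sum>x<N. \<nu> x * g x)"
  by (simp add: is_coupling_def flip: sum_distrib_right)

lemma is_coupling_sum_snd:
  "is_coupling N \<nu> \<pi> \<Longrightarrow> (\<Sum>x<N. \<Sum>y<N. \<pi> x y * g y) = (\<Sum>y<N. g y) / real N"
  by (subst sum.swap) (simp add: is_coupling_def sum_divide_distrib flip: sum_distrib_right)

lemma fisher_info_eq_fisher_sum:
  assumes "\<And>x. x < N \<Longrightarrow> 0 < \<nu> x"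
  shows "fisher_info N \<nu> = ereal (fisher_sum N \<nu>)"
proof -
  have "\<nu> x \<noteq> 0" "\<nu> ((x + 1) mod N) \<noteq> 0" if "x < N" for x
    using assms[of x] assms[of "(x + 1) mod N"] that by auto
  then show ?thesis
    by (auto simp: fisher_info_def fisher_sum_def intro!: sum.cong)
qed

lemma fisher_sum_nonneg:
  assumes "\<And>x. x < N \<Longrightarrow> 0 < \<nu> x"
  shows "0 \<le> fisher_sum N \<nu>"
  unfolding fisher_sum_def
proof (rule sum_nonneg)
  fix x assume "x \<in> {..<N}"
  then have "0 < \<nu> x" "0 < \<nu> ((x + 1) mod N)"
    using assms by auto
  then show "0 \<le> (ln (\<nu> ((x + 1) mod N)) - ln (\<nu> x)) * (\<nu> ((x + 1) mod N) - \<nu> x)"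
    using lin_log_diff_sq_le order_trans zero_le_power2 by blast
qed

lemma pos_if_fisher_info_finite:
  assumes "is_prob N \<nu>" "fisher_info N \<nu> \<noteq> \<infinity>" "x < N"
  shows "0 < \<nu> x"
proof -
  have "\<not> (\<exists>y<N. (\<nu> y = 0) \<noteq> (\<nu> ((y + 1) mod N) = 0))"
  proof
    assume "\<exists>y<N. (\<nu> y = 0) \<noteq> (\<nu> ((y + 1) mod N) = 0)"
    then have "fisher_info N \<nu> = \<infinity>"
      unfolding fisher_info_def by (rule if_P)
    with assms(2) show False
      by simp
  qed
  then have step: "\<nu> ((y + 1) mod N) = 0" if "y < N" "\<nu> y = 0" for y
    using that by blast
  have "\<nu> x \<noteq> 0"
  proof
    assume "\<nu> x = 0"
    have zero: "\<nu> ((x + k) mod N) = 0" for k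
    proof (induction k)
      case (Suc k)
      then show ?case
        using step[of "(x + k) mod N"] \<open>x < N\<close> by (simp add: mod_Suc_eq)
    qed (use \<open>\<nu> x = 0\<close> \<open>x < N\<close> in simp)
    have "\<nu> y = 0" if "y < N" for y
      using zero[of "y + N - x"] that \<open>x < N\<close> by simp
    then show False
      using assms(1) by (simp add: is_prob_def)
  qed
  then show ?thesis
    using assms by (simp add: is_prob_def order_less_le)
qed

lemma rel_entropy_le_coupling_lin_log:
  assumes pos: "\<And>x. x < N \<Longrightarrow> 0 < \<nu> x" and \<pi>: "is_coupling N \<nu> \<pi>"
  shows "rel_entropy N \<nu>
    \<le> (\<Sum>x<N. \<Sum>y<N. \<pi> x y * (lin_log (real N * \<nu> x) - lin_log (real N * \<nu> y)))"
proof -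
  define f where "f x = real N * \<nu> x" for x
  have f: "0 < f x" "\<nu> x = f x / real N" "ln (f x) = ln (\<nu> x) + ln (real N)" if "x < N" for x
    using pos[OF that] that by (auto simp: f_def ln_mult)
  have "rel_entropy N \<nu> = (\<Sum>x<N. f x * ln (f x) / real N)"
    unfolding rel_entropy_def using pos f by (intro sum.cong) auto
  also have "\<dots> \<le> (\<Sum>x<N. (f x - 1) * lin_log (f x) / real N)"
    using f by (intro sum_mono divide_right_mono mult_ln_le_lin_log) auto
  also have "\<dots> = (\<Sum>x<N. \<nu> x * lin_log (f x) - lin_log (f x) / real N)"
    using f by (intro sum.cong) (auto simp: diff_divide_distrib left_diff_distrib)
  also have "\<dots> = (\<Sum>x<N. \<Sum>y<N. \<pi> x y * (lin_log (f x) - lin_log (f y)))"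
    using is_coupling_sum_fst[OF \<pi>] is_coupling_sum_snd[OF \<pi>]
    by (simp add: right_diff_distrib sum_subtractf sum_divide_distrib)
  finally show ?thesis
    by (simp add: f_def)
qed

lemma sum_lin_log_increment_sq_le:
  assumes pos: "\<And>x. x < N \<Longrightarrow> 0 < \<nu> x"
  defines "F \<equiv> periodic_ext N (\<lambda>x. lin_log (real N * \<nu> x))"
  shows "(\<Sum>z<N. (F (int z + 1) - F (int z))\<^sup>2) \<le> real N * fisher_sum N \<nu>"
  unfolding fisher_sum_def sum_distrib_left
proof (rule sum_mono)
  fix z assume "z \<in> {..<N}"
  then have z: "z < N" "(z + 1) mod N < N" and N: "0 < real N"
    by auto
  have \<nu>: "0 < \<nu> z" "0 < \<nu> ((z + 1) mod N)"
    using pos z by auto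
  have "(F (int z + 1) - F (int z))\<^sup>2
      = (lin_log (real N * \<nu> ((z + 1) mod N)) - lin_log (real N * \<nu> z))\<^sup>2"
    using z by (simp add: F_def periodic_ext_Suc)
  also have "\<dots> \<le> (ln (real N * \<nu> ((z + 1) mod N)) - ln (real N * \<nu> z))
                 * (real N * \<nu> ((z + 1) mod N) - real N * \<nu> z)"
    using N \<nu> by (intro lin_log_diff_sq_le) auto
  also have "\<dots> = real N * ((ln (\<nu> ((z + 1) mod N)) - ln (\<nu> z)) * (\<nu> ((z + 1) mod N) - \<nu> z))"
    using N \<nu> by (simp add: ln_mult algebra_simps)
  finally show "(F (int z + 1) - F (int z))\<^sup>2
      \<le> real N * ((ln (\<nu> ((z + 1) mod N)) - ln (\<nu> z)) * (\<nu> ((z + 1) mod N) - \<nu> z))" .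
qed

lemma rel_entropy_le_fisher_transport:
  assumes "0 < N" and pos: "\<And>x. x < N \<Longrightarrow> 0 < \<nu> x" and \<pi>: "is_coupling N \<nu> \<pi>" and "0 < l"
  shows "rel_entropy N \<nu> \<le> fisher_sum N \<nu> / (2 * l) + l * transport_cost N \<pi> / 2"
proof -
  define F where "F = periodic_ext N (\<lambda>x. lin_log (real N * \<nu> x))"
  define c where "c x y = real (torus_dist N x y) + (real (torus_dist N x y))\<^sup>2" for x y
  have \<pi>_nonneg: "0 \<le> \<pi> x y" if "x < N" "y < N" for x y
    using \<pi> that by (simp add: is_coupling_def)
  have "rel_entropy N \<nu>
      \<le> (\<Sum>x<N. \<Sum>y<N. \<pi> x y * (lin_log (real N * \<nu> x) - lin_log (real N * \<nu> y)))"
    using pos \<pi> by (rule rel_entropy_le_coupling_lin_log)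
  also have "\<dots> \<le> (\<Sum>x<N. \<Sum>y<N. \<pi> x y * (path_excess F N l (int y) + l * c x y / 2))"
  proof (intro sum_mono)
    fix x y assume "x \<in> {..<N}" "y \<in> {..<N}"
    then have "lin_log (real N * \<nu> x) - lin_log (real N * \<nu> y) \<le> path_excess F N l (int y) + l * c x y / 2"
      using periodic_ext_diff_le_path_excess[of x N y "\<lambda>x. lin_log (real N * \<nu> x)" l]
      by (simp add: F_def c_def)
    then show "\<pi> x y * (lin_log (real N * \<nu> x) - lin_log (real N * \<nu> y))
        \<le> \<pi> x y * (path_excess F N l (int y) + l * c x y / 2)"
      using \<pi>_nonneg \<open>x \<in> {..<N}\<close> \<open>y \<in> {..<N}\<close> by (simp add: mult_left_mono)
  qed
  also have "\<dots> = (\<Sum>y<N. path_excess F N l (int y)) / real N + l * transport_cost N \<pi> / 2"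
  proof -
    have "(\<Sum>x<N. \<Sum>y<N. \<pi> x y * (l * c x y / 2)) = l * transport_cost N \<pi> / 2"
      by (simp add: transport_cost_def c_def sum_distrib_left sum_divide_distrib mult.left_commute)
    then show ?thesis
      by (simp only: distrib_left sum.distrib is_coupling_sum_snd[OF \<pi>])
  qed
  also have "\<dots> \<le> fisher_sum N \<nu> / (2 * l) + l * transport_cost N \<pi> / 2"
  proof -
    have "(\<Sum>y<N. path_excess F N l (int y)) \<le> (\<Sum>z<N. (F (int z + 1) - F (int z))\<^sup>2) / (2 * l)"
      using \<open>0 < l\<close> by (intro sum_path_excess_le) (simp add: F_def)
    also have "\<dots> \<le> real N * fisher_sum N \<nu> / (2 * l)"
      using sum_lin_log_increment_sq_le[OF pos] \<open>0 < l\<close> unfolding F_def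
      by (simp add: divide_right_mono)
    finally have "(\<Sum>y<N. path_excess F N l (int y)) / real N \<le> fisher_sum N \<nu> / (2 * l)"
      using \<open>0 < N\<close> by (simp add: pos_divide_le_eq algebra_simps)
    then show ?thesis
      by simp
  qed
  finally show ?thesis .
qed

lemma le_sqrt_mult_if_le_scaled_sum:
  fixes H a b :: real
  assumes H: "\<And>l. 0 < l \<Longrightarrow> H \<le> a / (2 * l) + l * b / 2" and "0 \<le> a" "0 \<le> b"
  shows "H \<le> sqrt a * sqrt b"
proof (rule field_le_epsilon)
  fix d :: real assume "0 < d"
  define s t where "s = sqrt a" and "t = sqrt b"
  define e where "e = d / (s + t + 1)"
  \<comment> \<open>The scale (s + e) / (t + e) perturbs the optimal one, s / t, so that it stays positive
    and finite when a or b vanishes.\<close>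
  have "0 \<le> s" "0 \<le> t" "a = s\<^sup>2" "b = t\<^sup>2"
    using assms by (simp_all add: s_def t_def)
  then have "0 < e"
    using \<open>0 < d\<close> by (simp add: e_def)
  have "a / (2 * ((s + e) / (t + e))) = s / (s + e) * (s * (t + e) / 2)"
    using \<open>0 \<le> s\<close> \<open>0 \<le> t\<close> \<open>0 < e\<close> \<open>a = s\<^sup>2\<close> by (simp add: field_simps power2_eq_square)
  also have "\<dots> \<le> s * (t + e) / 2"
    using \<open>0 \<le> s\<close> \<open>0 \<le> t\<close> \<open>0 < e\<close> by (intro mult_left_le_one_le) auto
  finally have 1: "a / (2 * ((s + e) / (t + e))) \<le> s * (t + e) / 2" .
  have "(s + e) / (t + e) * b / 2 = t / (t + e) * (t * (s + e) / 2)"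
    using \<open>0 \<le> t\<close> \<open>0 < e\<close> \<open>b = t\<^sup>2\<close> by (simp add: field_simps power2_eq_square)
  also have "\<dots> \<le> t * (s + e) / 2"
    using \<open>0 \<le> s\<close> \<open>0 \<le> t\<close> \<open>0 < e\<close> by (intro mult_left_le_one_le) auto
  finally have 2: "(s + e) / (t + e) * b / 2 \<le> t * (s + e) / 2" .
  have "H \<le> a / (2 * ((s + e) / (t + e))) + (s + e) / (t + e) * b / 2"
    using \<open>0 \<le> s\<close> \<open>0 \<le> t\<close> \<open>0 < e\<close> by (intro H divide_pos_pos) auto
  also have "\<dots> \<le> s * (t + e) / 2 + t * (s + e) / 2"
    using 1 2 by linarith
  also have "\<dots> = s * t + e * (s + t) / 2"
    by (simp add: field_simps)
  also have "e * (s + t) / 2 \<le> d"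
    using \<open>0 \<le> s\<close> \<open>0 \<le> t\<close> \<open>0 < d\<close> by (simp add: e_def field_simps)
  finally show "H \<le> sqrt a * sqrt b + d"
    by (simp add: s_def t_def)
qed

lemma Wc_nonneg: "is_prob N \<nu> \<Longrightarrow> 0 \<le> Wc N \<nu>"
  unfolding Wc_eq_transport_cost using is_coupling_product transport_cost_nonneg
  by (intro real_sqrt_ge_zero cInf_greatest) auto

lemma rel_entropy_le_Wc_mult_sqrt_fisher_sum:
  assumes "0 < N" "is_prob N \<nu>" "\<And>x. x < N \<Longrightarrow> 0 < \<nu> x"
  shows "rel_entropy N \<nu> \<le> Wc N \<nu> * sqrt (fisher_sum N \<nu>)"
proof -
  define S where "S = {transport_cost N \<pi> | \<pi>. is_coupling N \<nu> \<pi>}"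
  have "S \<noteq> {}"
    using is_coupling_product[OF assms(2)] by (auto simp: S_def)
  have "0 \<le> Inf S"
    using Wc_nonneg[OF assms(2)] by (simp add: Wc_eq_transport_cost S_def)
  have "rel_entropy N \<nu> \<le> fisher_sum N \<nu> / (2 * l) + l * Inf S / 2" if "0 < l" for l
  proof -
    have "(rel_entropy N \<nu> - fisher_sum N \<nu> / (2 * l)) * 2 / l \<le> Inf S"
    proof (rule cInf_greatest[OF \<open>S \<noteq> {}\<close>])
      fix s assume "s \<in> S"
      then obtain \<pi> where "is_coupling N \<nu> \<pi>" "s = transport_cost N \<pi>"
        by (auto simp: S_def)
      then have "rel_entropy N \<nu> \<le> fisher_sum N \<nu> / (2 * l) + l * s / 2"
        using rel_entropy_le_fisher_transport[of N \<nu> \<pi> l] assms that by simp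
      then show "(rel_entropy N \<nu> - fisher_sum N \<nu> / (2 * l)) * 2 / l \<le> s"
        using that by (simp add: field_simps)
    qed
    then show ?thesis
      using that by (simp add: field_simps)
  qed
  then have "rel_entropy N \<nu> \<le> sqrt (fisher_sum N \<nu>) * sqrt (Inf S)"
    using fisher_sum_nonneg[OF assms(3)] \<open>0 \<le> Inf S\<close> by (rule le_sqrt_mult_if_le_scaled_sum)
  then show ?thesis
    by (simp add: Wc_eq_transport_cost S_def mult.commute)
qed

theorem mainTheorem2:
  fixes N :: nat and \<nu> :: "nat \<Rightarrow> real"
  assumes "N \<ge> 1" and "is_prob N \<nu>"
  shows "ereal (rel_entropy N \<nu>) \<le>
           (if fisher_info N \<nu> = \<infinity> then \<infinity>
            else ereal (sqrt 2 * Wc N \<nu> * sqrt (real_of_ereal (fisher_info N \<nu>))))"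
proof (cases "fisher_info N \<nu> = \<infinity>")
  case False
  have pos: "\<And>x. x < N \<Longrightarrow> 0 < \<nu> x"
    using assms(2) False by (rule pos_if_fisher_info_finite)
  have "rel_entropy N \<nu> \<le> Wc N \<nu> * sqrt (fisher_sum N \<nu>)"
    using assms pos by (intro rel_entropy_le_Wc_mult_sqrt_fisher_sum) auto
  also have "\<dots> \<le> sqrt 2 * (Wc N \<nu> * sqrt (fisher_sum N \<nu>))"
  proof -
    have "0 \<le> Wc N \<nu> * sqrt (fisher_sum N \<nu>)"
      using Wc_nonneg[OF assms(2)] fisher_sum_nonneg[OF pos] by simp
    then show ?thesis
      using mult_right_mono[of 1 "sqrt 2"] by simp
  qed
  finally show ?thesis
    using False by (simp add: fisher_info_eq_fisher_sum[OF pos] mult.assoc)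
qed simp

end
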